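(* Let $\left|\psi\right\rangle\in\mathbb{C}^{d_A}\otimes\mathbb{C}^{d_B}$ be a pure bipartite state and let $\rho_A=\mathrm{Tr}_B\left|\psi\right\rangle\left\langle\psi\right|$. Then $$E_{MB}(\left|\psi\right\rangle)=S(\rho_A)=-\mathrm{Tr}(\rho_A\log_2\rho_A),$$ i.e. the entanglement measurement bound of a bipartite pure state equals its entanglement entropy. Moreover, for every orthonormal basis $\{|c^k\rangle\}$ of $\mathbb{C}^{d_A}$, the Alice-outcome distribution $p_k=\langle c^k|\rho_A|c^k\rangle$ satisfies $-\sum_k p_k\log_2 p_k\ge S(\rho_A)$, with equality when $\{|c^k\rangle\}$ is an eigenbasis of $\rho_A$.
   Context: Entanglement measurement bound (EMB). Let $\left|\psi\right\rangle$ be a unit vector in $\mathcal{H}_1\otimes\cdots\otimes\mathcal{H}_N$, $\mathcal{H}_j=\mathbb{C}^{d_j}$. An adaptive local measurement scheme consists of: an ordering $\pi$ of the parties $\{1,\dots,N\}$; an orthonormal basis $\{|\phi^{(1)}_{i_1}\rangle\}_{i_1}$ of $\mathcal{H}_{\pi(1)}$; and, for each $k=2,\dots,N$ and each outcome history $(i_1,\dots,i_{k-1})$, an orthonormal basis $\{|\phi^{(k)}_{i_k|i_1\dots i_{k-1}}\rangle\}_{i_k}$ of $\mathcal{H}_{\pi(k)}$ (which may depend on the history). Its outcome distribution is $p_{i_1\dots i_N}=\big|\big(\langle\phi^{(1)}_{i_1}|\otimes\langle\phi^{(2)}_{i_2|i_1}|\otimes\cdots\otimes\langle\phi^{(N)}_{i_N|i_1\dots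 i_{N-1}}|\big)\left|\psi\right\rangle\big|^2$, where the $k$-th bra acts on the tensor factor of party $\pi(k)$. The EMB is $E_{MB}(\left|\psi\right\rangle)=\min H(\mathbf{p})$, where $H(\mathbf{p})=-\sum p_{i_1\dots i_N}\log_2 p_{i_1\dots i_N}$ is the Shannon entropy and the minimum is over all adaptive local measurement schemes (including all orderings of the parties). *)

theory Defs
  imports Complex_Main
begin

text \<open>A vector of C^d is a function nat => complex, only the
components with index < d are meaningful. A family of vectors indexed by k < d
is a function b :: nat => nat => complex, where b k is the k-th vector and
b k i its i-th component. A bipartite state psi in C^dA (x) C^dB is given by
its coefficient array psi x y (x < dA, y < dB).\<close>

definition onb :: "nat \<Rightarrow> (nat \<Rightarrow> nat \<Rightarrow> complex) \<Rightarrow> bool" where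
  "onb d b \<longleftrightarrow> (\<forall>k<d. \<forall>l<d. (\<Sum>i<d. cnj (b k i) * b l i) = (if k = l then 1 else 0))"

definition eta :: "real \<Rightarrow> real" where
  "eta p = (if p = 0 then 0 else - p * log 2 p)"

text \<open>Outcome probability for measuring party A in basis a (outcome i) and then
party B in basis bs i (outcome j).\<close>
definition probAB :: "nat \<Rightarrow> nat \<Rightarrow> (nat \<Rightarrow> nat \<Rightarrow> complex) \<Rightarrow>
    (nat \<Rightarrow> nat \<Rightarrow> complex) \<Rightarrow> (nat \<Rightarrow> nat \<Rightarrow> nat \<Rightarrow> complex) \<Rightarrow> nat \<Rightarrow> nat \<Rightarrow> real" where
  "probAB dA dB psi a bs i j =
     (cmod (\<Sum>x<dA. \<Sum>y<dB. cnj (a i x) * cnj (bs i j y) * psi x y))\<^sup>2"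

text \<open>Outcome probability for measuring party B first in basis b (outcome i) and then
party A in basis as i (outcome j).\<close>
definition probBA :: "nat \<Rightarrow> nat \<Rightarrow> (nat \<Rightarrow> nat \<Rightarrow> complex) \<Rightarrow>
    (nat \<Rightarrow> nat \<Rightarrow> complex) \<Rightarrow> (nat \<Rightarrow> nat \<Rightarrow> nat \<Rightarrow> complex) \<Rightarrow> nat \<Rightarrow> nat \<Rightarrow> real" where
  "probBA dA dB psi b as i j =
     (cmod (\<Sum>x<dA. \<Sum>y<dB. cnj (as i j x) * cnj (b i y) * psi x y))\<^sup>2"

text \<open>Entropies of all adaptive local measurement schemes (both orderings).\<close>
definition scheme_entropies :: "nat \<Rightarrow> nat \<Rightarrow> (nat \<Rightarrow> nat \<Rightarrow> complex) \<Rightarrow> real set" where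
  "scheme_entropies dA dB psi =
     {h. \<exists>a bs. onb dA a \<and> (\<forall>i<dA. onb dB (bs i)) \<and>
           h = (\<Sum>i<dA. \<Sum>j<dB. eta (probAB dA dB psi a bs i j))}
   \<union> {h. \<exists>b as. onb dB b \<and> (\<forall>i<dB. onb dA (as i)) \<and>
           h = (\<Sum>i<dB. \<Sum>j<dA. eta (probBA dA dB psi b as i j))}"

text \<open>Entanglement measurement bound: the minimum (infimum, attainment stated
separately in the theorem) of the outcome entropy.\<close>
definition E_MB :: "nat \<Rightarrow> nat \<Rightarrow> (nat \<Rightarrow> nat \<Rightarrow> complex) \<Rightarrow> real" where
  "E_MB dA dB psi = Inf (scheme_entropies dA dB psi)"

definition rhoA :: "nat \<Rightarrow> nat \<Rightarrow> (nat \<Rightarrow> nat \<Rightarrow> complex) \<Rightarrow> nat \<Rightarrow> nat \<Rightarrow> complex" where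
  "rhoA dA dB psi x x' = (\<Sum>y<dB. psi x y * cnj (psi x' y))"

definition vn_entropy :: "nat \<Rightarrow> (nat \<Rightarrow> nat \<Rightarrow> complex) \<Rightarrow> real" where
  "vn_entropy d M = (THE s. \<exists>u lam. onb d u \<and>
      (\<forall>x<d. \<forall>x'<d. M x x' = (\<Sum>k<d. complex_of_real (lam k) * u k x * cnj (u k x'))) \<and>
      s = (\<Sum>k<d. eta (lam k)))"

definition alice_prob :: "nat \<Rightarrow> (nat \<Rightarrow> nat \<Rightarrow> complex) \<Rightarrow> (nat \<Rightarrow> nat \<Rightarrow> complex) \<Rightarrow> nat \<Rightarrow> real" where
  "alice_prob d rho c k = Re (\<Sum>x<d. \<Sum>x'<d. cnj (c k x) * rho x x' * c k x')"

definition eigenbasis :: "nat \<Rightarrow> (nat \<Rightarrow> nat \<Rightarrow> complex) \<Rightarrow> (nat \<Rightarrow> nat \<Rightarrow> complex) \<Rightarrow> bool" where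
  "eigenbasis d M c \<longleftrightarrow> onb d c \<and>
     (\<forall>k<d. \<exists>\<mu>. \<forall>x<d. (\<Sum>x'<d. M x x' * c k x') = \<mu> * c k x)"

end

theory Submission
  imports Defs "Jordan_Normal_Form.Spectral_Radius"
begin

(* The analytic core is a Jensen-type inequality for the Shannon summand eta
   under a column-stochastic, row-substochastic matrix.  It yields one
   entropy bound for an orthogonal family phi_k with squared norms lam_k:
   measuring the sum of the rank-one operators |phi_k><phi_k| in any
   orthonormal basis gives outcome entropy >= sum_k eta(lam_k).  Applied on
   Alice's side this bounds every diagonal of rho_A (and hence all
   Alice-first schemes, since the second measurement only refines outcomes);
   applied on Bob's side to the conditional states <u_k|psi> it bounds all
   Bob-first schemes.  Measuring Alice in an eigenbasis of rho_A and then Bob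
   along the normalised conditional state attains the bound. *)

section \<open>Vectors of C^d\<close>

definition ip :: "nat \<Rightarrow> (nat \<Rightarrow> complex) \<Rightarrow> (nat \<Rightarrow> complex) \<Rightarrow> complex" where
  "ip d f g = (\<Sum>i<d. cnj (f i) * g i)"

definition nrm :: "nat \<Rightarrow> (nat \<Rightarrow> complex) \<Rightarrow> real" where
  "nrm d f = (\<Sum>i<d. (cmod (f i))\<^sup>2)"

definition app :: "nat \<Rightarrow> (nat \<Rightarrow> nat \<Rightarrow> complex) \<Rightarrow> (nat \<Rightarrow> complex) \<Rightarrow> nat \<Rightarrow> complex" where
  "app d M f x = (\<Sum>x'<d. M x x' * f x')"

definition unit_of :: "nat \<Rightarrow> (nat \<Rightarrow> complex) \<Rightarrow> nat \<Rightarrow> complex" where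
  "unit_of d f = (\<lambda>x. complex_of_real (1 / sqrt (nrm d f)) * f x)"

lemma cnj_mult_self: "cnj z * z = complex_of_real ((cmod z)\<^sup>2)"
  by (metis complex_norm_square mult.commute)

lemma mult_cnj_self: "z * cnj z = complex_of_real ((cmod z)\<^sup>2)"
  by (metis complex_norm_square)

lemma ip_self: "ip d f f = complex_of_real (nrm d f)"
  unfolding ip_def nrm_def by (simp add: cnj_mult_self)

lemma nrm_nonneg: "nrm d f \<ge> 0"
  unfolding nrm_def by (simp add: sum_nonneg)

lemma nrm_zero: "nrm d f = 0 \<Longrightarrow> i < d \<Longrightarrow> f i = 0"
  unfolding nrm_def by (subst (asm) sum_nonneg_eq_0_iff) auto

lemma ip_cnj: "ip d g f = cnj (ip d f g)"
  unfolding ip_def by (simp add: mult.commute)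

lemma ip_sum_right: "ip d f (\<lambda>x. \<Sum>j\<in>J. c j * g j x) = (\<Sum>j\<in>J. c j * ip d f (g j))"
  unfolding ip_def by (simp add: sum_distrib_left sum_distrib_right sum.swap[of _ J] mult_ac)

lemma ip_sum_left: "ip d (\<lambda>x. \<Sum>j\<in>J. c j * g j x) f = (\<Sum>j\<in>J. cnj (c j) * ip d (g j) f)"
  unfolding ip_def by (simp add: sum_distrib_left sum_distrib_right sum.swap[of _ J] mult_ac)

lemma ip_scale_left: "ip d (\<lambda>x. c * g x) f = cnj c * ip d g f"
  unfolding ip_def by (simp add: sum_distrib_left mult_ac)

lemma ip_scale_right: "ip d f (\<lambda>x. c * g x) = c * ip d f g"
  unfolding ip_def by (simp add: sum_distrib_left mult_ac)

lemma ip_diff_left: "ip d (\<lambda>x. f x - g x) h = ip d f h - ip d g h"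
  unfolding ip_def by (simp add: algebra_simps sum_subtractf)

lemma ip_diff_right: "ip d h (\<lambda>x. f x - g x) = ip d h f - ip d h g"
  unfolding ip_def by (simp add: algebra_simps sum_subtractf)

lemma ip_cong:
  "(\<And>i. i < d \<Longrightarrow> f i = f' i) \<Longrightarrow> (\<And>i. i < d \<Longrightarrow> g i = g' i) \<Longrightarrow> ip d f g = ip d f' g'"
  unfolding ip_def by (rule sum.cong) auto

lemma app_sum: "app d M (\<lambda>x. \<Sum>j\<in>J. c j * g j x) x = (\<Sum>j\<in>J. c j * app d M (g j) x)"
  unfolding app_def by (simp add: sum_distrib_left sum.swap[of _ J] mult_ac)

lemma app_scale: "app d M (\<lambda>x. c * g x) x = c * app d M g x"
  unfolding app_def by (simp add: sum_distrib_left mult_ac)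

lemma ip_unit_of:
  assumes "nrm d f > 0"
  shows "ip d (unit_of d f) (unit_of d f) = 1"
  unfolding unit_of_def ip_scale_left ip_scale_right
  using assms by (simp add: ip_self real_sqrt_mult[symmetric] flip: of_real_mult)

lemma ip_unit_of_right: "ip d g (unit_of d f) = complex_of_real (1 / sqrt (nrm d f)) * ip d g f"
  unfolding unit_of_def by (rule ip_scale_right)

lemma app_unit_of: "app d M (unit_of d f) x = complex_of_real (1 / sqrt (nrm d f)) * app d M f x"
  unfolding unit_of_def by (rule app_scale)

lemma sum_split_add: "(\<Sum>c<k+(m::nat). f c) = (\<Sum>c<k. f c) + (\<Sum>a<m. f (k+a))"
  by (induction m) (auto simp: add.assoc)

section \<open>Orthonormal families\<close>

definition orthn :: "nat \<Rightarrow> nat \<Rightarrow> (nat \<Rightarrow> nat \<Rightarrow> complex) \<Rightarrow> bool" where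
  "orthn d k u \<longleftrightarrow> (\<forall>j<k. \<forall>l<k. ip d (u j) (u l) = (if j = l then 1 else 0))"

lemma onb_ip: "onb d b \<longleftrightarrow> (\<forall>k<d. \<forall>l<d. ip d (b k) (b l) = (if k = l then 1 else 0))"
  by (simp add: onb_def ip_def)

lemma onb_orthn: "onb d u \<longleftrightarrow> orthn d d u"
  by (simp add: onb_ip orthn_def)

lemma onb_nrm: "onb d c \<Longrightarrow> i < d \<Longrightarrow> nrm d (c i) = 1"
  using ip_self[of d "c i"] by (simp add: onb_ip)

text \<open>Completeness of an orthonormal basis, sum_k |u_k><u_k| = 1: a left inverse of
  a square matrix is a right inverse.\<close>
lemma onb_complete:
  assumes "onb d u" "x < d" "x' < d"
  shows "(\<Sum>k<d. u k x * cnj (u k x')) = (if x = x' then 1 else 0)"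
proof -
  define U where "U = mat d d (\<lambda>(x,k). u k x)"
  define V where "V = mat d d (\<lambda>(k,x). cnj (u k x))"
  have U: "U \<in> carrier_mat d d" and V: "V \<in> carrier_mat d d" unfolding U_def V_def by auto
  have "V * U = 1\<^sub>m d"
  proof (rule eq_matI)
    fix i j assume i: "i < dim_row (1\<^sub>m d)" and j: "j < dim_col (1\<^sub>m d)"
    hence "(V * U) $$ (i,j) = (\<Sum>x<d. cnj (u i x) * u j x)"
      using U V by (simp add: scalar_prod_def U_def V_def lessThan_atLeast0)
    also have "\<dots> = 1\<^sub>m d $$ (i,j)" using assms(1) i j by (simp add: onb_def)
    finally show "(V * U) $$ (i,j) = 1\<^sub>m d $$ (i,j)" .
  qed (auto simp: V_def U_def)
  hence "U * V = 1\<^sub>m d" by (rule mat_mult_left_right_inverse[OF V U])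
  hence "(U * V) $$ (x,x') = 1\<^sub>m d $$ (x,x')" by simp
  thus ?thesis using assms(2,3) U V by (simp add: scalar_prod_def U_def V_def lessThan_atLeast0)
qed

lemma onb_expand:
  assumes "onb d u" "x < d"
  shows "f x = (\<Sum>k<d. ip d (u k) f * u k x)"
proof -
  have "(\<Sum>x'<d. (if x = x' then 1 else 0) * f x') = (\<Sum>x'<d. if x = x' then f x' else 0)"
    by (rule sum.cong) auto
  hence "f x = (\<Sum>x'<d. (if x = x' then 1 else 0) * f x')" using assms(2) by simp
  also have "\<dots> = (\<Sum>x'<d. (\<Sum>k<d. u k x * cnj (u k x')) * f x')"
    by (rule sum.cong) (auto simp: onb_complete[OF assms(1) assms(2)])
  also have "\<dots> = (\<Sum>k<d. ip d (u k) f * u k x)"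
    unfolding ip_def sum_distrib_left sum_distrib_right
    by (rule trans[OF sum.swap]) (simp add: mult_ac)
  finally show ?thesis .
qed

lemma parseval:
  assumes "onb d u"
  shows "(\<Sum>k<d. (cmod (ip d (u k) f))\<^sup>2) = nrm d f"
proof -
  have "complex_of_real (nrm d f) = ip d f f" by (simp add: ip_self)
  also have "\<dots> = ip d f (\<lambda>x. \<Sum>k<d. ip d (u k) f * u k x)"
    by (rule ip_cong) (auto intro: onb_expand[OF assms])
  also have "\<dots> = (\<Sum>k<d. ip d (u k) f * ip d f (u k))" by (rule ip_sum_right)
  also have "\<dots> = (\<Sum>k<d. complex_of_real ((cmod (ip d (u k) f))\<^sup>2))"
    by (rule sum.cong) (auto simp: ip_cnj[of d f] mult_cnj_self simp del: of_real_power)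
  finally show ?thesis by (metis of_real_eq_iff of_real_sum)
qed

text \<open>Bessel's inequality for an orthogonal (not necessarily normalised) family
  phi_k with squared norms lam_k > 0: the residual f - sum_k (<phi_k,f>/lam_k) phi_k
  has squared norm nrm f minus the left-hand side.\<close>
lemma bessel:
  fixes phi :: "nat \<Rightarrow> nat \<Rightarrow> complex" and lam :: "nat \<Rightarrow> real"
  assumes fK: "finite K"
    and orth: "\<And>k l. k \<in> K \<Longrightarrow> l \<in> K \<Longrightarrow>
      ip d (phi k) (phi l) = (if k = l then complex_of_real (lam k) else 0)"
    and pos: "\<And>k. k \<in> K \<Longrightarrow> lam k > 0"
  shows "(\<Sum>k\<in>K. (cmod (ip d (phi k) f))\<^sup>2 / lam k) \<le> nrm d f"
proof -
  define c where "c k = ip d (phi k) f / complex_of_real (lam k)" for k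
  define S where "S = (\<Sum>k\<in>K. (cmod (ip d (phi k) f))\<^sup>2 / lam k)"
  define g where "g = (\<lambda>x. \<Sum>k\<in>K. c k * phi k x)"
  have ck: "cnj (c k) * ip d (phi k) f = complex_of_real ((cmod (ip d (phi k) f))\<^sup>2 / lam k)" for k
    by (simp add: c_def cnj_mult_self)
  have gf: "ip d g f = complex_of_real S"
    unfolding g_def ip_sum_left S_def by (simp add: ck)
  have pg: "ip d (phi k) g = c k * complex_of_real (lam k)" if k: "k \<in> K" for k
  proof -
    have "ip d (phi k) g = (\<Sum>l\<in>K. c l * ip d (phi k) (phi l))" unfolding g_def by (rule ip_sum_right)
    also have "\<dots> = (\<Sum>l\<in>K. if l = k then c l * complex_of_real (lam k) else 0)"
      by (rule sum.cong) (auto simp: orth k)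
    also have "\<dots> = c k * complex_of_real (lam k)" using k fK by simp
    finally show ?thesis .
  qed
  have gg: "ip d g g = complex_of_real S"
  proof -
    have "ip d g g = (\<Sum>k\<in>K. cnj (c k) * ip d (phi k) g)" by (subst (1) g_def) (rule ip_sum_left)
    also have "\<dots> = (\<Sum>k\<in>K. cnj (c k) * ip d (phi k) f)"
      by (rule sum.cong) (use pos in \<open>auto simp: pg c_def\<close>)
    also have "\<dots> = complex_of_real S" unfolding S_def by (simp add: ck)
    finally show ?thesis .
  qed
  have fg: "ip d f g = complex_of_real S" using gf by (simp add: ip_cnj[of d f g])
  have "complex_of_real (nrm d (\<lambda>x. f x - g x)) = ip d (\<lambda>x. f x - g x) (\<lambda>x. f x - g x)"
    by (simp add: ip_self)
  also have "\<dots> = ip d f f - ip d f g - (ip d g f - ip d g g)"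
    by (simp add: ip_diff_left ip_diff_right)
  also have "\<dots> = complex_of_real (nrm d f - S)" unfolding fg gf gg ip_self[of d f] by simp
  finally have "nrm d (\<lambda>x. f x - g x) = nrm d f - S" by (metis of_real_eq_iff)
  thus ?thesis using nrm_nonneg[of d "\<lambda>x. f x - g x"] S_def by simp
qed

lemma orthn_extend:
  assumes orth: "orthn d k u" and v1: "ip d v v = 1" and vo: "\<forall>j<k. ip d (u j) v = 0"
  shows "orthn d (Suc k) (u(k := v))"
  unfolding orthn_def
proof (intro allI impI)
  fix j l assume j: "j < Suc k" and l: "l < Suc k"
  have vo': "ip d v (u j) = 0" if "j < k" for j
    using vo that ip_cnj[of d v "u j"] by simp
  show "ip d ((u(k:=v)) j) ((u(k:=v)) l) = (if j = l then 1 else 0)"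
    using j l orth v1 vo vo' by (cases "j = k"; cases "l = k") (auto simp: orthn_def)
qed

text \<open>Fewer than d orthonormal vectors do not span C^d: some standard basis vector
  e_i has a nonzero component orthogonal to them, since otherwise the trace count
  d = sum_i sum_j |u_j i|^2 = k would hold.\<close>
lemma exists_unit_orthogonal:
  assumes k: "k < d" and orth: "orthn d k u"
  shows "\<exists>v. ip d v v = 1 \<and> (\<forall>j<k. ip d (u j) v = 0)"
proof -
  define P where "P i = (\<lambda>x. (if x = i then 1 else 0) - (\<Sum>j<k. cnj (u j i) * u j x))" for i
  have "\<exists>i<d. \<exists>x<d. P i x \<noteq> 0"
  proof (rule ccontr)
    assume "\<not> ?thesis"
    hence z: "\<And>i. i < d \<Longrightarrow> P i i = 0" by auto
    have "(of_nat d :: complex) = (\<Sum>i<d. \<Sum>j<k. cnj (u j i) * u j i)"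
      using z by (simp add: P_def)
    also have "\<dots> = (\<Sum>j<k. ip d (u j) (u j))" unfolding ip_def by (rule sum.swap)
    also have "\<dots> = of_nat k" using orth by (simp add: orthn_def)
    finally show False using k by simp
  qed
  then obtain i x where i: "i < d" and x: "x < d" and nz: "P i x \<noteq> 0" by auto
  have pos: "nrm d (P i) > 0"
    using nrm_zero[of d "P i" x] x nz nrm_nonneg[of d "P i"] by fastforce
  have ortho: "ip d (u l) (P i) = 0" if l: "l < k" for l
  proof -
    have "ip d (u l) (\<lambda>x. if x = i then 1 else 0) = (\<Sum>x<d. if x = i then cnj (u l x) else 0)"
      unfolding ip_def by (rule sum.cong) auto
    also have "\<dots> = cnj (u l i)" using i by simp
    finally have e: "ip d (u l) (\<lambda>x. if x = i then 1 else 0) = cnj (u l i)" .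
    have "ip d (u l) (\<lambda>x. \<Sum>j<k. cnj (u j i) * u j x) = (\<Sum>j<k. cnj (u j i) * ip d (u l) (u j))"
      by (rule ip_sum_right)
    also have "\<dots> = (\<Sum>j<k. if j = l then cnj (u j i) else 0)"
      by (rule sum.cong) (use orth l in \<open>auto simp: orthn_def\<close>)
    also have "\<dots> = cnj (u l i)" using l by simp
    finally show ?thesis unfolding P_def ip_diff_right e by simp
  qed
  show ?thesis
    using ip_unit_of[OF pos] ortho by (intro exI[of _ "unit_of d (P i)"]) (simp add: ip_unit_of_right)
qed

lemma orthn_grow:
  assumes step: "\<And>k u. k < d \<Longrightarrow> orthn d k u \<Longrightarrow> \<forall>j<k. P (u j) \<Longrightarrow>
      \<exists>v. ip d v v = 1 \<and> (\<forall>j<k. ip d (u j) v = 0) \<and> P v"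
  shows "k \<le> d \<Longrightarrow> orthn d k u \<Longrightarrow> \<forall>j<k. P (u j) \<Longrightarrow>
      \<exists>u'. onb d u' \<and> (\<forall>j<d. P (u' j)) \<and> (\<forall>j<k. u' j = u j)"
proof (induction "d - k" arbitrary: k u)
  case 0
  thus ?case by (intro exI[of _ u]) (auto simp: onb_orthn)
next
  case (Suc m)
  hence k: "k < d" by simp
  obtain v where v: "ip d v v = 1" "\<forall>j<k. ip d (u j) v = 0" "P v"
    using step[OF k Suc.prems(2,3)] by blast
  have m: "m = d - Suc k" using Suc.hyps(2) by simp
  have ext: "orthn d (Suc k) (u(k := v))" by (rule orthn_extend[OF Suc.prems(2) v(1,2)])
  have ext_P: "\<forall>j<Suc k. P ((u(k := v)) j)" using Suc.prems(3) v(3) by (simp add: less_Suc_eq)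
  from Suc.hyps(1)[OF m _ ext ext_P] k
  obtain u' where "onb d u'" "\<forall>j<d. P (u' j)" "\<forall>j<Suc k. u' j = (u(k := v)) j"
    by auto
  thus ?case by auto
qed

lemma onb_extend:
  assumes "k \<le> d" "orthn d k u"
  shows "\<exists>u'. onb d u' \<and> (\<forall>j<k. u' j = u j)"
  using orthn_grow[where P = "\<lambda>_. True", OF _ assms] exists_unit_orthogonal by auto

section \<open>The spectral theorem for Hermitian matrices\<close>

definition hermitian :: "nat \<Rightarrow> (nat \<Rightarrow> nat \<Rightarrow> complex) \<Rightarrow> bool" where
  "hermitian d M \<longleftrightarrow> (\<forall>x<d. \<forall>x'<d. M x' x = cnj (M x x'))"

definition eigvec :: "nat \<Rightarrow> (nat \<Rightarrow> nat \<Rightarrow> complex) \<Rightarrow> (nat \<Rightarrow> complex) \<Rightarrow> bool" where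
  "eigvec d M v \<longleftrightarrow> (\<exists>\<mu>. \<forall>x<d. app d M v x = \<mu> * v x)"

lemma eigenbasis_eigvec: "eigenbasis d M c \<longleftrightarrow> onb d c \<and> (\<forall>k<d. eigvec d M (c k))"
  by (simp add: eigenbasis_def eigvec_def app_def)

lemma exists_eigenvector:
  fixes B :: "nat \<Rightarrow> nat \<Rightarrow> complex"
  assumes m: "m > 0"
  shows "\<exists>z \<nu>. (\<exists>a<m. z a \<noteq> 0) \<and> (\<forall>a<m. (\<Sum>b<m. B a b * z b) = \<nu> * z a)"
proof -
  define A where "A = mat m m (\<lambda>(a,b). B a b)"
  have A: "A \<in> carrier_mat m m" unfolding A_def by simp
  from spectrum_non_empty[OF A m] obtain \<nu> where "eigenvalue A \<nu>" unfolding spectrum_def by auto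
  then obtain v where v: "v \<in> carrier_vec m" "v \<noteq> 0\<^sub>v m" "A *\<^sub>v v = \<nu> \<cdot>\<^sub>v v"
    unfolding eigenvalue_def eigenvector_def using A by auto
  have "\<exists>a<m. v $ a \<noteq> 0"
  proof (rule ccontr)
    assume "\<not> ?thesis"
    hence "v = 0\<^sub>v m" using v(1) by (intro eq_vecI) auto
    with v(2) show False by simp
  qed
  moreover have "(\<Sum>b<m. B a b * v $ b) = \<nu> * v $ a" if a: "a < m" for a
  proof -
    have "(A *\<^sub>v v) $ a = (\<nu> \<cdot>\<^sub>v v) $ a" using v(3) by simp
    thus ?thesis using a v(1) A by (simp add: A_def scalar_prod_def lessThan_atLeast0)
  qed
  ultimately show ?thesis by blast
qed

lemma herm_ip:
  assumes herm: "hermitian d M"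
  shows "ip d f (app d M g) = ip d (app d M f) g"
proof -
  have "ip d f (app d M g) = (\<Sum>x<d. \<Sum>x'<d. cnj (f x) * M x x' * g x')"
    unfolding ip_def app_def by (simp add: sum_distrib_left mult_ac)
  also have "\<dots> = (\<Sum>x'<d. \<Sum>x<d. cnj (f x) * M x x' * g x')" by (rule sum.swap)
  also have "\<dots> = ip d (app d M f) g"
    unfolding ip_def app_def sum_distrib_right cnj_sum
  proof (rule sum.cong[OF refl], rule sum.cong[OF refl])
    fix x' x assume "x' \<in> {..<d}" "x \<in> {..<d}"
    hence "cnj (M x' x) = M x x'" using herm by (metis complex_cnj_cnj hermitian_def lessThan_iff)
    thus "cnj (f x) * M x x' * g x' = cnj (M x' x * f x) * g x'" by simp
  qed
  finally show ?thesis .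
qed

text \<open>If the first k vectors of an orthonormal basis w are eigenvectors of a
  Hermitian M, the span of the remaining m = d - k vectors is M-invariant.\<close>
lemma complement_invariant:
  assumes herm: "hermitian d M" and w: "onb d w" and kd: "d = k + m"
    and eig: "\<forall>j<k. eigvec d M (w j)" and b: "b < m" and x: "x < d"
  shows "app d M (w (k+b)) x = (\<Sum>a<m. ip d (w (k+a)) (app d M (w (k+b))) * w (k+a) x)"
proof -
  have low: "ip d (w j) (app d M (w (k+b))) = 0" if j: "j < k" for j
  proof -
    obtain \<mu> where \<mu>: "\<forall>x<d. app d M (w j) x = \<mu> * w j x" using eig j by (auto simp: eigvec_def)
    have "ip d (w j) (app d M (w (k+b))) = ip d (app d M (w j)) (w (k+b))" by (rule herm_ip[OF herm])
    also have "\<dots> = ip d (\<lambda>x. \<mu> * w j x) (w (k+b))" by (rule ip_cong) (use \<mu> in auto)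
    also have "\<dots> = cnj \<mu> * ip d (w j) (w (k+b))" by (rule ip_scale_left)
    also have "\<dots> = 0" using w j b kd by (simp add: onb_ip)
    finally show ?thesis .
  qed
  have "app d M (w (k+b)) x = (\<Sum>c<d. ip d (w c) (app d M (w (k+b))) * w c x)"
    by (rule onb_expand[OF w x])
  also have "\<dots> = (\<Sum>c<k. ip d (w c) (app d M (w (k+b))) * w c x)
      + (\<Sum>a<m. ip d (w (k+a)) (app d M (w (k+b))) * w (k+a) x)"
    unfolding kd sum_split_add ..
  finally show ?thesis using low by simp
qed

text \<open>An eigenvector of the compression of M to that invariant span is an
  eigenvector of M orthogonal to the first k basis vectors.\<close>
lemma eigvec_in_complement:
  assumes herm: "hermitian d M" and w: "onb d w" and k: "k < d"
    and eig: "\<forall>j<k. eigvec d M (w j)"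
  shows "\<exists>y. nrm d y > 0 \<and> (\<forall>j<k. ip d (w j) y = 0) \<and> eigvec d M y"
proof -
  define m where "m = d - k"
  have m: "m > 0" and kd: "d = k + m" using k by (auto simp: m_def)
  define B where "B a b = ip d (w (k+a)) (app d M (w (k+b)))" for a b
  obtain z \<nu> where znz: "\<exists>a<m. z a \<noteq> 0" and zeig: "\<forall>a<m. (\<Sum>b<m. B a b * z b) = \<nu> * z a"
    using exists_eigenvector[OF m, of B] by auto
  define y where "y = (\<lambda>x. \<Sum>b<m. z b * w (k+b) x)"
  have ipy: "ip d (w c) y = (\<Sum>b<m. if k + b = c then z b else 0)" if c: "c < d" for c
    unfolding y_def ip_sum_right by (rule sum.cong) (use w c kd in \<open>auto simp: onb_ip\<close>)
  have low: "ip d (w j) y = 0" if "j < k" for j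
    using ipy[of j] that kd by simp
  have "ip d y y = (\<Sum>b<m. cnj (z b) * ip d (w (k+b)) y)"
    by (subst (1) y_def) (rule ip_sum_left)
  also have "\<dots> = complex_of_real (nrm m z)"
    using ipy kd by (simp add: nrm_def cnj_mult_self)
  finally have "nrm d y = nrm m z" by (simp add: ip_self)
  moreover have "nrm m z > 0"
    using znz nrm_zero[of m z] nrm_nonneg[of m z] by (metis order_less_le)
  moreover have "app d M y x = \<nu> * y x" if x: "x < d" for x
  proof -
    have "app d M y x = (\<Sum>b<m. z b * (\<Sum>a<m. B a b * w (k+a) x))"
      unfolding y_def app_sum B_def
      by (rule sum.cong) (use complement_invariant[OF herm w kd eig _ x] in auto)
    also have "\<dots> = (\<Sum>a<m. (\<Sum>b<m. B a b * z b) * w (k+a) x)"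
      unfolding sum_distrib_left sum_distrib_right
      by (rule trans[OF sum.swap]) (simp add: mult_ac)
    also have "\<dots> = \<nu> * y x"
      unfolding y_def using zeig by (simp add: sum_distrib_left mult_ac)
    finally show ?thesis .
  qed
  ultimately show ?thesis using low unfolding eigvec_def by (intro exI[of _ y] conjI exI[of _ \<nu>]) auto
qed

lemma hermitian_eigvec_step:
  assumes herm: "hermitian d M" and k: "k < d" and u: "orthn d k u"
    and eig: "\<forall>j<k. eigvec d M (u j)"
  shows "\<exists>v. ip d v v = 1 \<and> (\<forall>j<k. ip d (u j) v = 0) \<and> eigvec d M v"
proof -
  obtain w where w: "onb d w" and wu: "\<forall>j<k. w j = u j"
    using onb_extend[of k d u] k u by auto
  obtain y where y: "nrm d y > 0" "\<forall>j<k. ip d (u j) y = 0" "eigvec d M y"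
    using eigvec_in_complement[OF herm w k] eig wu by auto
  obtain \<mu> where \<mu>: "\<forall>x<d. app d M y x = \<mu> * y x" using y(3) by (auto simp: eigvec_def)
  have "eigvec d M (unit_of d y)"
    unfolding eigvec_def app_unit_of using \<mu> by (intro exI[of _ \<mu>]) (simp add: unit_of_def)
  thus ?thesis
    using ip_unit_of[OF y(1)] y(2) by (intro exI[of _ "unit_of d y"]) (simp add: ip_unit_of_right)
qed

theorem spectral_theorem:
  assumes "hermitian d M"
  shows "\<exists>c. onb d c \<and> (\<forall>k<d. eigvec d M (c k))"
proof -
  have "orthn d 0 u" for u by (simp add: orthn_def)
  thus ?thesis
    using orthn_grow[where P = "eigvec d M" and k = 0, OF hermitian_eigvec_step[OF assms]] by blast
qed

section \<open>Entropy inequalities\<close>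

definition eta_ln :: "real \<Rightarrow> real" where "eta_ln p = (if p = 0 then 0 else - p * ln p)"

lemma eta_eta_ln: "eta p = eta_ln p / ln 2"
  by (simp add: eta_def eta_ln_def log_def)

text \<open>Pointwise form of the Gibbs inequality ln t <= t - 1, with t = q / mu.\<close>
lemma eta_ln_term_bound:
  fixes B mu q :: real
  assumes B: "B \<ge> 0" and mu: "mu \<ge> 0" and q: "q \<ge> B * mu"
  shows "B * mu * (- ln q) \<ge> B * eta_ln mu + B * mu - B * q"
proof (cases "B = 0 \<or> mu = 0")
  case True
  moreover have "B * q \<ge> 0" using B mu q by (metis mult_nonneg_nonneg order_trans zero_le_mult_iff)
  ultimately show ?thesis by (auto simp: eta_ln_def)
next
  case False
  hence Bp: "B > 0" and mp: "mu > 0" using B mu by auto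
  hence qp: "q > 0" using q by (metis mult_pos_pos order_less_le_trans)
  have "ln (q / mu) \<le> q / mu - 1" using qp mp by (intro ln_le_minus_one) simp
  hence "ln q - ln mu \<le> q / mu - 1" using qp mp by (simp add: ln_divide_pos)
  hence "mu * (ln q - ln mu) \<le> mu * (q / mu - 1)" using mp by (intro mult_left_mono) auto
  hence "mu * (ln q - ln mu) \<le> q - mu" using mp by (simp add: algebra_simps)
  hence "B * (mu * (ln q - ln mu)) \<le> B * (q - mu)" using Bp by (intro mult_left_mono) auto
  thus ?thesis using mp by (simp add: eta_ln_def algebra_simps)
qed

lemma entropy_stochastic_ln:
  fixes B :: "nat \<Rightarrow> nat \<Rightarrow> real" and mu q :: "nat \<Rightarrow> real"
  assumes fI: "finite I" and fK: "finite K"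
    and B: "\<And>i k. i \<in> I \<Longrightarrow> k \<in> K \<Longrightarrow> B i k \<ge> 0"
    and mu: "\<And>k. k \<in> K \<Longrightarrow> mu k \<ge> 0"
    and q: "\<And>i. i \<in> I \<Longrightarrow> q i = (\<Sum>k\<in>K. B i k * mu k)"
    and row: "\<And>i. i \<in> I \<Longrightarrow> (\<Sum>k\<in>K. B i k) \<le> 1"
    and col: "\<And>k. k \<in> K \<Longrightarrow> mu k > 0 \<Longrightarrow> (\<Sum>i\<in>I. B i k) = 1"
  shows "(\<Sum>k\<in>K. eta_ln (mu k)) \<le> (\<Sum>i\<in>I. eta_ln (q i))"
proof -
  have qnn: "q i \<ge> 0" if "i \<in> I" for i
    using q[OF that] B[OF that] mu by (auto intro: sum_nonneg)
  have qge: "q i \<ge> B i k * mu k" if i: "i \<in> I" and k: "k \<in> K" for i k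
  proof -
    have "B i k * mu k \<le> (\<Sum>k\<in>K. B i k * mu k)"
      by (rule member_le_sum) (use B i mu k fK in auto)
    thus ?thesis using q[OF i] by simp
  qed
  have Eq: "eta_ln (q i) = (\<Sum>k\<in>K. B i k * mu k * (- ln (q i)))" if i: "i \<in> I" for i
  proof -
    have "eta_ln (q i) = q i * (- ln (q i))" by (simp add: eta_ln_def)
    also have "\<dots> = (\<Sum>k\<in>K. B i k * mu k * (- ln (q i)))"
      by (subst (1) q[OF i]) (rule sum_distrib_right)
    finally show ?thesis .
  qed
  have "(\<Sum>i\<in>I. eta_ln (q i)) = (\<Sum>i\<in>I. \<Sum>k\<in>K. B i k * mu k * (- ln (q i)))"
    by (rule sum.cong) (auto simp: Eq)
  also have "\<dots> \<ge> (\<Sum>i\<in>I. \<Sum>k\<in>K. B i k * eta_ln (mu k) + B i k * mu k - B i k * q i)"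
    by (intro sum_mono eta_ln_term_bound) (auto simp: B mu qge)
  finally have 1: "(\<Sum>i\<in>I. eta_ln (q i))
      \<ge> (\<Sum>i\<in>I. \<Sum>k\<in>K. B i k * eta_ln (mu k) + B i k * mu k - B i k * q i)" .
  have 2: "(\<Sum>i\<in>I. \<Sum>k\<in>K. B i k * eta_ln (mu k) + B i k * mu k - B i k * q i)
      = (\<Sum>k\<in>K. eta_ln (mu k) * (\<Sum>i\<in>I. B i k)) + (\<Sum>k\<in>K. mu k * (\<Sum>i\<in>I. B i k))
        - (\<Sum>i\<in>I. q i * (\<Sum>k\<in>K. B i k))"
    by (simp add: sum_subtractf sum.distrib sum_distrib_left sum.swap[of _ I] mult_ac)
  have colE: "eta_ln (mu k) * (\<Sum>i\<in>I. B i k) = eta_ln (mu k)" if k: "k \<in> K" for k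
    using col[OF k] mu[OF k] by (cases "mu k = 0") (auto simp: eta_ln_def)
  have colM: "mu k * (\<Sum>i\<in>I. B i k) = mu k" if k: "k \<in> K" for k
    using col[OF k] mu[OF k] by (cases "mu k = 0") auto
  have rowq: "(\<Sum>i\<in>I. q i * (\<Sum>k\<in>K. B i k)) \<le> (\<Sum>i\<in>I. q i)"
    by (rule sum_mono) (use qnn row in \<open>auto intro: mult_left_le\<close>)
  have sq: "(\<Sum>i\<in>I. q i) = (\<Sum>k\<in>K. mu k * (\<Sum>i\<in>I. B i k))"
    by (simp add: q sum_distrib_left sum.swap[of _ I] mult_ac)
  show ?thesis using 1 2 rowq sq colE colM
    by (simp add: sum.cong[OF refl colE] sum.cong[OF refl colM])
qed

lemma entropy_stochastic:
  fixes B :: "nat \<Rightarrow> nat \<Rightarrow> real" and mu q :: "nat \<Rightarrow> real"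
  assumes "finite I" "finite K"
    and "\<And>i k. i \<in> I \<Longrightarrow> k \<in> K \<Longrightarrow> B i k \<ge> 0"
    and "\<And>k. k \<in> K \<Longrightarrow> mu k \<ge> 0"
    and "\<And>i. i \<in> I \<Longrightarrow> q i = (\<Sum>k\<in>K. B i k * mu k)"
    and "\<And>i. i \<in> I \<Longrightarrow> (\<Sum>k\<in>K. B i k) \<le> 1"
    and "\<And>k. k \<in> K \<Longrightarrow> mu k > 0 \<Longrightarrow> (\<Sum>i\<in>I. B i k) = 1"
  shows "(\<Sum>k\<in>K. eta (mu k)) \<le> (\<Sum>i\<in>I. eta (q i))"
  using divide_right_mono[OF entropy_stochastic_ln[OF assms], of "ln 2"]
  by (simp add: eta_eta_ln sum_divide_distrib)

lemma eta_subadditive: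
  fixes p :: "nat \<Rightarrow> real"
  assumes fJ: "finite J" and p: "\<And>j. j \<in> J \<Longrightarrow> p j \<ge> 0"
  shows "eta (\<Sum>j\<in>J. p j) \<le> (\<Sum>j\<in>J. eta (p j))"
proof -
  define P where "P = (\<Sum>j\<in>J. p j)"
  have "eta_ln P \<le> (\<Sum>j\<in>J. eta_ln (p j))"
  proof (cases "P = 0")
    case True
    hence "\<forall>j\<in>J. p j = 0" using p fJ by (simp add: P_def sum_nonneg_eq_0_iff)
    thus ?thesis using True by (simp add: eta_ln_def)
  next
    case False
    have "eta_ln P = P * (- ln P)" by (simp add: eta_ln_def)
    also have "\<dots> = (\<Sum>j\<in>J. p j * (- ln P))" by (subst (1) P_def) (rule sum_distrib_right)
    also have "\<dots> \<le> (\<Sum>j\<in>J. eta_ln (p j))"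
    proof (rule sum_mono)
      fix j assume j: "j \<in> J"
      have le: "p j \<le> P" unfolding P_def by (rule member_le_sum) (use p j fJ in auto)
      show "p j * (- ln P) \<le> eta_ln (p j)"
      proof (cases "p j = 0")
        case True thus ?thesis by (simp add: eta_ln_def)
      next
        case False
        hence "p j > 0" using p[OF j] by simp
        hence "ln (p j) \<le> ln P" using le by simp
        thus ?thesis using \<open>p j > 0\<close> by (simp add: eta_ln_def mult_left_mono)
      qed
    qed
    finally show ?thesis .
  qed
  hence "eta_ln P / ln 2 \<le> (\<Sum>j\<in>J. eta_ln (p j)) / ln 2" by (simp add: divide_right_mono)
  thus ?thesis by (simp add: eta_eta_ln sum_divide_distrib P_def)
qed

text \<open>The
  probabilities q_i = sum_k |<b_i,phi_k>|^2 in an orthonormal basis b arise from lam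
  through B_ik = |<b_i,phi_k>|^2 / lam_k, whose columns sum to 1 (Parseval) and whose
  rows sum to at most 1 (Bessel); hence sum_k eta(lam_k) <= sum_i eta(q_i).\<close>
lemma orthogonal_family_entropy:
  fixes phi :: "nat \<Rightarrow> nat \<Rightarrow> complex" and lam :: "nat \<Rightarrow> real"
  assumes fK: "finite K" and b: "onb d b"
    and orth: "\<And>k l. k \<in> K \<Longrightarrow> l \<in> K \<Longrightarrow>
      ip d (phi k) (phi l) = (if k = l then complex_of_real (lam k) else 0)"
  shows "(\<Sum>k\<in>K. eta (lam k)) \<le> (\<Sum>i<d. eta (\<Sum>k\<in>K. (cmod (ip d (b i) (phi k)))\<^sup>2))"
proof -
  have nphi: "nrm d (phi k) = lam k" if "k \<in> K" for k
    using orth[OF that that] by (simp add: ip_self)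
  have phi0: "ip d f (phi k) = 0" if "k \<in> K" "lam k = 0" for k f
    using nrm_zero[of d "phi k"] nphi[of k] that by (simp add: ip_def)
  define B where "B i k = (if lam k > 0 then (cmod (ip d (b i) (phi k)))\<^sup>2 / lam k else 0)" for i k
  show ?thesis
  proof (rule entropy_stochastic[where B = B])
    show "lam k \<ge> 0" if "k \<in> K" for k using nphi[OF that] nrm_nonneg[of d "phi k"] by simp
    show "(\<Sum>k\<in>K. (cmod (ip d (b i) (phi k)))\<^sup>2) = (\<Sum>k\<in>K. B i k * lam k)" for i
    proof (rule sum.cong)
      fix k assume k: "k \<in> K"
      show "(cmod (ip d (b i) (phi k)))\<^sup>2 = B i k * lam k"
        using nphi[OF k] nrm_nonneg[of d "phi k"] phi0[OF k] by (cases "lam k > 0") (auto simp: B_def)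
    qed simp
    show "(\<Sum>k\<in>K. B i k) \<le> 1" if i: "i \<in> {..<d}" for i
    proof -
      define K' where "K' = {k \<in> K. lam k > 0}"
      have "(\<Sum>k\<in>K. B i k) = (\<Sum>k\<in>K'. (cmod (ip d (phi k) (b i)))\<^sup>2 / lam k)"
        unfolding K'_def using fK
        by (subst sum.inter_filter) (auto simp: B_def ip_cnj[of d "b i"] intro!: sum.cong)
      also have "\<dots> \<le> nrm d (b i)" by (rule bessel) (use fK in \<open>auto simp: K'_def orth\<close>)
      also have "\<dots> = 1" using onb_nrm[OF b] i by simp
      finally show ?thesis .
    qed
    show "(\<Sum>i<d. B i k) = 1" if k: "k \<in> K" and lp: "lam k > 0" for k
      using lp parseval[OF b, of "phi k"] nphi[OF k] by (simp add: B_def flip: sum_divide_distrib)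
  qed (use fK in \<open>auto simp: B_def\<close>)
qed

section \<open>Spectral decompositions and the von Neumann entropy\<close>

definition psd :: "nat \<Rightarrow> (nat \<Rightarrow> nat \<Rightarrow> complex) \<Rightarrow> bool" where
  "psd d M \<longleftrightarrow> (\<forall>f. 0 \<le> Re (ip d f (app d M f)))"

definition spec_dec :: "nat \<Rightarrow> (nat \<Rightarrow> nat \<Rightarrow> complex) \<Rightarrow> (nat \<Rightarrow> nat \<Rightarrow> complex) \<Rightarrow> (nat \<Rightarrow> real) \<Rightarrow> bool" where
  "spec_dec d M v mu \<longleftrightarrow> onb d v \<and>
     (\<forall>x<d. \<forall>x'<d. M x x' = (\<Sum>k<d. complex_of_real (mu k) * v k x * cnj (v k x')))"

lemma alice_prob_ip: "alice_prob d M c k = Re (ip d (c k) (app d M (c k)))"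
  by (simp add: alice_prob_def ip_def app_def sum_distrib_left mult_ac)

lemma spec_dec_form:
  assumes "spec_dec d M v mu"
  shows "ip d g (app d M f) = (\<Sum>k<d. complex_of_real (mu k) * ip d (v k) f * ip d g (v k))"
proof -
  have "app d M f x = (\<Sum>k<d. (complex_of_real (mu k) * ip d (v k) f) * v k x)" if x: "x < d" for x
  proof -
    have "app d M f x = (\<Sum>x'<d. (\<Sum>k<d. complex_of_real (mu k) * v k x * cnj (v k x')) * f x')"
      unfolding app_def by (rule sum.cong) (use assms x in \<open>auto simp: spec_dec_def\<close>)
    also have "\<dots> = (\<Sum>k<d. (complex_of_real (mu k) * ip d (v k) f) * v k x)"
      unfolding ip_def sum_distrib_left sum_distrib_right
      by (rule trans[OF sum.swap]) (simp add: mult_ac)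
    finally show ?thesis .
  qed
  hence "ip d g (app d M f) = ip d g (\<lambda>x. \<Sum>k<d. (complex_of_real (mu k) * ip d (v k) f) * v k x)"
    by (intro ip_cong) auto
  thus ?thesis by (simp add: ip_sum_right)
qed

lemma spec_dec_ip:
  assumes "spec_dec d M v mu" "k < d" "l < d"
  shows "ip d (v l) (app d M (v k)) = (if k = l then complex_of_real (mu k) else 0)"
proof -
  have "ip d (v l) (app d M (v k)) = (\<Sum>j<d. if j = k \<and> j = l then complex_of_real (mu j) else 0)"
    unfolding spec_dec_form[OF assms(1)]
    by (rule sum.cong) (use assms in \<open>auto simp: spec_dec_def onb_ip\<close>)
  thus ?thesis using assms(2,3) by auto
qed

lemma spec_dec_diagonal: "spec_dec d M v mu \<Longrightarrow> i < d \<Longrightarrow> alice_prob d M v i = mu i"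
  by (simp add: alice_prob_ip spec_dec_ip)

lemma spec_dec_nonneg:
  assumes "psd d M" "spec_dec d M v mu" "k < d"
  shows "mu k \<ge> 0"
  using assms(1) spec_dec_diagonal[OF assms(2,3)] unfolding psd_def alice_prob_ip by metis

lemma spec_dec_alice:
  assumes "spec_dec d M v mu"
  shows "alice_prob d M c i = (\<Sum>k<d. mu k * (cmod (ip d (v k) (c i)))\<^sup>2)"
proof -
  have "ip d (c i) (app d M (c i)) = (\<Sum>k<d. complex_of_real (mu k * (cmod (ip d (v k) (c i)))\<^sup>2))"
    unfolding spec_dec_form[OF assms]
    by (rule sum.cong) (auto simp: ip_cnj[of d "c i"] mult_cnj_self simp del: of_real_power)
  thus ?thesis unfolding alice_prob_ip by (metis Re_complex_of_real of_real_sum)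
qed

text \<open>Schur concavity of entropy: the eigenvalue entropy is the least diagonal entropy.
  The scaled eigenvectors sqrt(mu_k) v_k form the orthogonal family.\<close>
lemma diagonal_entropy_ge:
  assumes dv: "spec_dec d M v mu" and nonneg: "\<forall>k<d. mu k \<ge> 0" and c: "onb d c"
  shows "(\<Sum>k<d. eta (mu k)) \<le> (\<Sum>i<d. eta (alice_prob d M c i))"
proof -
  define phi where "phi k = (\<lambda>x. complex_of_real (sqrt (mu k)) * v k x)" for k
  have orth: "ip d (phi k) (phi l) = (if k = l then complex_of_real (mu k) else 0)"
    if "k \<in> {..<d}" "l \<in> {..<d}" for k l
    using that dv nonneg
    by (auto simp: phi_def ip_scale_left ip_scale_right spec_dec_def onb_ip
             simp flip: of_real_mult)
  have "alice_prob d M c i = (\<Sum>k<d. (cmod (ip d (c i) (phi k)))\<^sup>2)" for i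
    unfolding spec_dec_alice[OF dv] phi_def ip_scale_right
    by (rule sum.cong) (use nonneg in \<open>auto simp: norm_mult ip_cnj[of d "c i"] power_mult_distrib\<close>)
  thus ?thesis using orthogonal_family_entropy[OF finite_lessThan c orth] by simp
qed

text \<open>vn_entropy is well defined for psd matrices: two spectral decompositions have
  the same eigenvalue entropy, each being bounded by the diagonal of the other.\<close>
lemma vn_entropy_eq:
  assumes psd: "psd d M" and dv: "spec_dec d M v mu"
  shows "vn_entropy d M = (\<Sum>k<d. eta (mu k))"
  unfolding vn_entropy_def
proof (rule the_equality)
  show "\<exists>u lam. onb d u \<and> (\<forall>x<d. \<forall>x'<d. M x x' = (\<Sum>k<d. complex_of_real (lam k) * u k x * cnj (u k x'))) \<and>
      (\<Sum>k<d. eta (mu k)) = (\<Sum>k<d. eta (lam k))"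
    using dv unfolding spec_dec_def by blast
next
  fix s assume "\<exists>u lam. onb d u \<and> (\<forall>x<d. \<forall>x'<d. M x x' = (\<Sum>k<d. complex_of_real (lam k) * u k x * cnj (u k x'))) \<and>
      s = (\<Sum>k<d. eta (lam k))"
  then obtain u lam where du: "spec_dec d M u lam" and s: "s = (\<Sum>k<d. eta (lam k))"
    unfolding spec_dec_def by blast
  have "(\<Sum>k<d. eta (mu k)) \<le> (\<Sum>k<d. eta (lam k))"
    using diagonal_entropy_ge[OF dv _, of u] spec_dec_nonneg[OF psd dv] du spec_dec_diagonal[OF du]
    by (simp add: spec_dec_def)
  moreover have "(\<Sum>k<d. eta (lam k)) \<le> (\<Sum>k<d. eta (mu k))"
    using diagonal_entropy_ge[OF du _, of v] spec_dec_nonneg[OF psd du] dv spec_dec_diagonal[OF dv]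
    by (simp add: spec_dec_def)
  ultimately show "s = (\<Sum>k<d. eta (mu k))" using s by simp
qed

lemma eigenbasis_spec_dec:
  assumes herm: "hermitian d M" and c: "onb d c" and ev: "\<forall>k<d. eigvec d M (c k)"
  shows "spec_dec d M c (alice_prob d M c)"
  unfolding spec_dec_def
proof (intro conjI c allI impI)
  have eig: "app d M (c k) x = complex_of_real (alice_prob d M c k) * c k x" if "k < d" "x < d" for k x
  proof -
    obtain \<nu> where \<nu>: "\<forall>x<d. app d M (c k) x = \<nu> * c k x" using ev \<open>k < d\<close> by (auto simp: eigvec_def)
    have "ip d (c k) (app d M (c k)) = ip d (c k) (\<lambda>x. \<nu> * c k x)" by (rule ip_cong) (use \<nu> in auto)
    hence val: "ip d (c k) (app d M (c k)) = \<nu>" using c \<open>k < d\<close> by (simp add: ip_scale_right onb_ip)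
    have "cnj (ip d (c k) (app d M (c k))) = ip d (c k) (app d M (c k))"
      using herm_ip[OF herm, of "c k" "c k"] ip_cnj[of d "c k" "app d M (c k)"] by simp
    hence "\<nu> = complex_of_real (alice_prob d M c k)"
      by (simp add: val alice_prob_ip complex_eq_iff)
    thus ?thesis using \<nu> \<open>x < d\<close> by simp
  qed
  fix x x' assume x: "x < d" and x': "x' < d"
  have "M x x' = (\<Sum>x''<d. M x x'' * (if x'' = x' then 1 else 0))"
    using x' by (simp add: if_distrib cong: if_cong)
  also have "\<dots> = (\<Sum>x''<d. M x x'' * (\<Sum>k<d. c k x'' * cnj (c k x')))"
    by (rule sum.cong) (auto simp: onb_complete[OF c _ x'])
  also have "\<dots> = (\<Sum>k<d. app d M (c k) x * cnj (c k x'))"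
    unfolding app_def sum_distrib_left sum_distrib_right
    by (rule trans[OF sum.swap]) (simp add: mult_ac)
  also have "\<dots> = (\<Sum>k<d. complex_of_real (alice_prob d M c k) * c k x * cnj (c k x'))"
    by (rule sum.cong) (auto simp: eig x)
  finally show "M x x' = (\<Sum>k<d. complex_of_real (alice_prob d M c k) * c k x * cnj (c k x'))" .
qed

section \<open>The reduced state\<close>

text \<open>The unnormalised state of B after A is projected onto f: (<f| (x) 1)|psi>.\<close>
definition cond_state :: "nat \<Rightarrow> (nat \<Rightarrow> nat \<Rightarrow> complex) \<Rightarrow> (nat \<Rightarrow> complex) \<Rightarrow> nat \<Rightarrow> complex" where
  "cond_state dA psi f y = (\<Sum>x<dA. cnj (f x) * psi x y)"

lemma rhoA_quadratic:
  "ip dA g (app dA (rhoA dA dB psi) f) = ip dB (cond_state dA psi f) (cond_state dA psi g)"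
proof -
  have "ip dA g (app dA (rhoA dA dB psi) f) =
      (\<Sum>x<dA. \<Sum>x'<dA. \<Sum>y<dB. cnj (g x) * psi x y * cnj (psi x' y) * f x')"
    by (simp add: ip_def app_def rhoA_def sum_distrib_left sum_distrib_right mult_ac)
  also have "\<dots> = (\<Sum>y<dB. \<Sum>x<dA. \<Sum>x'<dA. cnj (g x) * psi x y * cnj (psi x' y) * f x')"
    by (subst sum.swap) (simp add: sum.swap[of _ "{..<dA}" "{..<dB}"])
  also have "\<dots> = ip dB (cond_state dA psi f) (cond_state dA psi g)"
    by (simp add: ip_def cond_state_def sum_distrib_left sum_distrib_right mult_ac)
  finally show ?thesis .
qed

lemma hermitian_rhoA: "hermitian dA (rhoA dA dB psi)"
  by (simp add: hermitian_def rhoA_def mult.commute)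

lemma alice_prob_rhoA: "alice_prob dA (rhoA dA dB psi) c k = nrm dB (cond_state dA psi (c k))"
  by (simp add: alice_prob_ip rhoA_quadratic ip_self)

lemma psd_rhoA: "psd dA (rhoA dA dB psi)"
  by (simp add: psd_def rhoA_quadratic ip_self nrm_nonneg)

lemma cond_state_swap: "ip dA f (cond_state dB (\<lambda>y x. psi x y) g) = ip dB g (cond_state dA psi f)"
  unfolding ip_def cond_state_def sum_distrib_left
  by (rule trans[OF sum.swap]) (simp add: mult_ac)

section \<open>Measurement schemes\<close>

lemma probAB_ip: "probAB dA dB psi a bs i j = (cmod (ip dB (bs i j) (cond_state dA psi (a i))))\<^sup>2"
proof -
  have "(\<Sum>x<dA. \<Sum>y<dB. cnj (a i x) * cnj (bs i j y) * psi x y)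
      = (\<Sum>y<dB. cnj (bs i j y) * (\<Sum>x<dA. cnj (a i x) * psi x y))"
    unfolding sum_distrib_left by (rule trans[OF sum.swap]) (simp add: mult_ac)
  thus ?thesis by (simp add: probAB_def ip_def cond_state_def)
qed

lemma probBA_swap: "probBA dA dB psi b as i j = probAB dB dA (\<lambda>y x. psi x y) b as i j"
proof -
  have "(\<Sum>x<dA. \<Sum>y<dB. cnj (as i j x) * cnj (b i y) * psi x y)
      = (\<Sum>y<dB. \<Sum>x<dA. cnj (b i y) * cnj (as i j x) * psi x y)"
    by (rule trans[OF sum.swap]) (simp add: mult_ac)
  thus ?thesis by (simp add: probAB_def probBA_def)
qed

text \<open>An Alice-first scheme refines Alice's outcome distribution in basis a.\<close>
lemma alice_first_bound:
  assumes bs: "\<forall>i<dA. onb dB (bs i)"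
  shows "(\<Sum>i<dA. eta (alice_prob dA (rhoA dA dB psi) a i))
    \<le> (\<Sum>i<dA. \<Sum>j<dB. eta (probAB dA dB psi a bs i j))"
proof (rule sum_mono)
  fix i assume i: "i \<in> {..<dA}"
  have "alice_prob dA (rhoA dA dB psi) a i = (\<Sum>j<dB. probAB dA dB psi a bs i j)"
    using parseval[of dB "bs i" "cond_state dA psi (a i)"] bs i by (simp add: alice_prob_rhoA probAB_ip)
  also have "eta \<dots> \<le> (\<Sum>j<dB. eta (probAB dA dB psi a bs i j))"
    by (rule eta_subadditive) (auto simp: probAB_ip)
  finally show "eta (alice_prob dA (rhoA dA dB psi) a i) \<le> (\<Sum>j<dB. eta (probAB dA dB psi a bs i j))" .
qed

text \<open>Bob's outcome distribution in any basis has entropy at least that of rho_A: the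
  conditional states of an eigenbasis of rho_A form an orthogonal family in C^dB
  with squared norms the eigenvalues.\<close>
lemma bob_marginal_entropy:
  assumes du: "spec_dec dA (rhoA dA dB psi) u lam" and b: "onb dB b"
  shows "(\<Sum>k<dA. eta (lam k)) \<le> (\<Sum>i<dB. eta (alice_prob dB (rhoA dB dA (\<lambda>y x. psi x y)) b i))"
proof -
  have u: "onb dA u" using du by (simp add: spec_dec_def)
  define phi where "phi k = cond_state dA psi (u k)" for k
  have orth: "ip dB (phi k) (phi l) = (if k = l then complex_of_real (lam k) else 0)"
    if "k \<in> {..<dA}" "l \<in> {..<dA}" for k l
  proof -
    have "ip dB (phi k) (phi l) = ip dA (u l) (app dA (rhoA dA dB psi) (u k))"
      unfolding phi_def by (rule rhoA_quadratic[symmetric])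
    also have "\<dots> = (if k = l then complex_of_real (lam k) else 0)"
      by (rule spec_dec_ip[OF du]) (use that in auto)
    finally show ?thesis .
  qed
  have swap: "ip dA (u k) (cond_state dB (\<lambda>y x. psi x y) (b i)) = ip dB (b i) (phi k)" for k i
    unfolding phi_def by (rule cond_state_swap)
  have marg: "alice_prob dB (rhoA dB dA (\<lambda>y x. psi x y)) b i = (\<Sum>k<dA. (cmod (ip dB (b i) (phi k)))\<^sup>2)"
    for i
  proof -
    have "alice_prob dB (rhoA dB dA (\<lambda>y x. psi x y)) b i = nrm dA (cond_state dB (\<lambda>y x. psi x y) (b i))"
      by (rule alice_prob_rhoA)
    also have "\<dots> = (\<Sum>k<dA. (cmod (ip dA (u k) (cond_state dB (\<lambda>y x. psi x y) (b i))))\<^sup>2)"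
      by (rule parseval[OF u, symmetric])
    also have "\<dots> = (\<Sum>k<dA. (cmod (ip dB (b i) (phi k)))\<^sup>2)"
      by (simp only: swap)
    finally show ?thesis .
  qed
  show ?thesis
    unfolding marg by (rule orthogonal_family_entropy[OF finite_lessThan b orth])
qed

lemma scheme_entropy_lower_bound:
  assumes du: "spec_dec dA (rhoA dA dB psi) u lam" and h: "h \<in> scheme_entropies dA dB psi"
  shows "(\<Sum>k<dA. eta (lam k)) \<le> h"
proof -
  have lam: "\<forall>k<dA. lam k \<ge> 0" using spec_dec_nonneg[OF psd_rhoA du] by blast
  from h consider
      (AB) a bs where "onb dA a" "\<forall>i<dA. onb dB (bs i)"
        "h = (\<Sum>i<dA. \<Sum>j<dB. eta (probAB dA dB psi a bs i j))"
    | (BA) b as where "onb dB b" "\<forall>i<dB. onb dA (as i)"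
        "h = (\<Sum>i<dB. \<Sum>j<dA. eta (probBA dA dB psi b as i j))"
    unfolding scheme_entropies_def by blast
  thus ?thesis
  proof cases
    case AB
    show ?thesis using diagonal_entropy_ge[OF du lam AB(1)] alice_first_bound[OF AB(2), of psi a] AB(3)
      by linarith
  next
    case BA
    show ?thesis
      using bob_marginal_entropy[OF du BA(1)] alice_first_bound[OF BA(2), of "\<lambda>y x. psi x y" b] BA(3)
      by (simp add: probBA_swap)
  qed
qed

text \<open>For a single vector f there is a basis whose first element is parallel to f, so
  that measuring f in it has entropy eta(|f|^2).\<close>
lemma basis_concentrating_vector:
  assumes d: "d > 0"
  shows "\<exists>b. onb d b \<and> (\<Sum>j<d. eta ((cmod (ip d (b j) f))\<^sup>2)) = eta (nrm d f)"
proof (cases "nrm d f = 0")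
  case True
  obtain b where b: "onb d b" using onb_extend[of 0 d] by (auto simp: orthn_def)
  have "ip d g f = 0" for g using nrm_zero[OF True] by (simp add: ip_def)
  thus ?thesis using b True by (intro exI[of _ b]) (simp add: eta_def)
next
  case False
  hence pos: "nrm d f > 0" using nrm_nonneg[of d f] by simp
  obtain b where b: "onb d b" and b0: "b 0 = unit_of d f"
    using onb_extend[of 1 d "\<lambda>_. unit_of d f"] d ip_unit_of[OF pos] by (auto simp: orthn_def)
  have f: "f = (\<lambda>x. complex_of_real (sqrt (nrm d f)) * b 0 x)"
    using pos by (simp add: b0 unit_of_def real_sqrt_divide flip: of_real_mult)
  have "ip d (b j) f = (if j = 0 then complex_of_real (sqrt (nrm d f)) else 0)" if "j < d" for j
    using b d that by (subst f) (simp add: ip_scale_right onb_ip)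
  hence "(\<Sum>j<d. eta ((cmod (ip d (b j) f))\<^sup>2)) = (\<Sum>j<d. if j = 0 then eta (nrm d f) else 0)"
    using pos by (intro sum.cong) (auto simp: eta_def)
  thus ?thesis using b d by (intro exI[of _ b]) simp
qed

text \<open>Measuring Alice in the eigenbasis u and then Bob along the normalised
  conditional state attains the eigenvalue entropy.\<close>
lemma scheme_attains_spectral_entropy:
  assumes du: "spec_dec dA (rhoA dA dB psi) u lam" and dB: "dB > 0"
  shows "(\<Sum>k<dA. eta (lam k)) \<in> scheme_entropies dA dB psi"
proof -
  define phi where "phi i = cond_state dA psi (u i)" for i
  have "\<forall>i. \<exists>b. onb dB b \<and> (\<Sum>j<dB. eta ((cmod (ip dB (b j) (phi i)))\<^sup>2)) = eta (nrm dB (phi i))"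
    using basis_concentrating_vector[OF dB] by blast
  from choice[OF this] obtain bs where
    bs: "\<forall>i. onb dB (bs i) \<and> (\<Sum>j<dB. eta ((cmod (ip dB (bs i j) (phi i)))\<^sup>2)) = eta (nrm dB (phi i))"
    by blast
  have row: "(\<Sum>j<dB. eta (probAB dA dB psi u bs i j)) = eta (lam i)" if i: "i < dA" for i
  proof -
    have "nrm dB (phi i) = lam i"
      using alice_prob_rhoA[of dA dB psi u i] spec_dec_diagonal[OF du i] by (simp add: phi_def)
    thus ?thesis using bs by (simp add: probAB_ip phi_def)
  qed
  have "(\<Sum>i<dA. \<Sum>j<dB. eta (probAB dA dB psi u bs i j)) = (\<Sum>i<dA. eta (lam i))"
    by (rule sum.cong) (simp_all add: row)
  moreover have "onb dA u" using du by (simp add: spec_dec_def)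
  ultimately show ?thesis
    unfolding scheme_entropies_def using bs by (intro UnI1 CollectI exI[of _ u] exI[of _ bs]) auto
qed

theorem mainTheorem1:
  fixes dA dB :: nat and psi :: "nat \<Rightarrow> nat \<Rightarrow> complex"
  assumes "(\<Sum>x<dA. \<Sum>y<dB. (cmod (psi x y))\<^sup>2) = 1"
  shows "vn_entropy dA (rhoA dA dB psi) \<in> scheme_entropies dA dB psi
    \<and> E_MB dA dB psi = vn_entropy dA (rhoA dA dB psi)
    \<and> (\<forall>c. onb dA c \<longrightarrow>
          (\<Sum>k<dA. eta (alice_prob dA (rhoA dA dB psi) c k)) \<ge> vn_entropy dA (rhoA dA dB psi))
    \<and> (\<forall>c. eigenbasis dA (rhoA dA dB psi) c \<longrightarrow>
          (\<Sum>k<dA. eta (alice_prob dA (rhoA dA dB psi) c k)) = vn_entropy dA (rhoA dA dB psi))"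
proof -
  let ?r = "rhoA dA dB psi"
  have dB: "dB > 0" using assms by (cases dB) auto
  obtain c0 where c0: "onb dA c0" "\<forall>k<dA. eigvec dA ?r (c0 k)"
    using spectral_theorem[OF hermitian_rhoA] by blast
  define lam where "lam = alice_prob dA ?r c0"
  have du: "spec_dec dA ?r c0 lam" unfolding lam_def by (rule eigenbasis_spec_dec[OF hermitian_rhoA c0])
  have vn: "vn_entropy dA ?r = (\<Sum>k<dA. eta (lam k))" by (rule vn_entropy_eq[OF psd_rhoA du])
  have mem: "vn_entropy dA ?r \<in> scheme_entropies dA dB psi"
    using scheme_attains_spectral_entropy[OF du dB] vn by simp
  have "E_MB dA dB psi = vn_entropy dA ?r"
    unfolding E_MB_def vn using scheme_entropy_lower_bound[OF du] mem vn by (intro cInf_eq_minimum) auto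
  moreover have "\<forall>c. onb dA c \<longrightarrow> (\<Sum>k<dA. eta (alice_prob dA ?r c k)) \<ge> vn_entropy dA ?r"
    using diagonal_entropy_ge[OF du] spec_dec_nonneg[OF psd_rhoA du] vn by simp
  moreover have "\<forall>c. eigenbasis dA ?r c \<longrightarrow> (\<Sum>k<dA. eta (alice_prob dA ?r c k)) = vn_entropy dA ?r"
  proof (intro allI impI)
    fix c assume "eigenbasis dA ?r c"
    hence "spec_dec dA ?r c (alice_prob dA ?r c)"
      using eigenbasis_spec_dec[OF hermitian_rhoA] by (simp add: eigenbasis_eigvec)
    from vn_entropy_eq[OF psd_rhoA this]
    show "(\<Sum>k<dA. eta (alice_prob dA ?r c k)) = vn_entropy dA ?r" by simp
  qed
  ultimately show ?thesis using mem by blast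
qed

end
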